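(* Let $m$ be even, $\Omega\subseteq\mathbb R^m$ open, and let $F\in\mathcal C^3(\Omega)$ take values in the $(m/2)$-vectors of $\mathbb R_{0,m}$. Then $F$ is inframonogenic in $\Omega$ if and only if both $F$ and $F(\underline x)\underline x$ are left $3$-monogenic in $\Omega$ (i.e. $\partial_{\underline x}^3F=0$ and $\partial_{\underline x}^3(F\underline x)=0$), and this holds if and only if both $F$ and $\underline xF(\underline x)$ are right $3$-monogenic in $\Omega$ (i.e. $F\partial_{\underline x}^3=0$ and $(\underline xF)\partial_{\underline x}^3=0$).
   Context: $\mathbb R_{0,m}$ is the $2^m$-dimensional real Clifford algebra generated by the orthonormal basis $e_1,\dots,e_m$ of $\mathbb R^m$ with relations $e_je_k+e_ke_j=-2\delta_{jk}$; it has basis $e_A=e_{j_1}\cdots e_{j_k}$, $A=\{j_1<\dots<j_k\}$, and the $k$-vectors are $\sum_{|A|=k}a_Ae_A$, $a_A\in\mathbb R$. A point of $\mathbb R^m$ is identified with $\underline x=\sum_j x_je_j$. The Dirac operator $\partial_{\underline x}=\sum_j e_j\partial_{x_j}$ acts from the left, $\partial_{\underline x}f=\sum_j e_j\partial_{x_j}f$, or from the right, $f\partial_{\underline x}=\sum_j(\partial_{x_j}f)e_j$; powers denote iterated application on the same side. $f\in\mathcal C^2$ is inframonogenic if $\partial_{\underline x}f\partial_{\underline x}=\sum_{i,j}e_i(\partial_{x_i}\partial_{x_j}f)e_j=0$. *)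

theory Defs
  imports "HOL-Analysis.Analysis"
begin


text \<open>Real Clifford algebra R_{0,m}, m = CARD('n), with the generators indexed by a
finite linearly ordered type 'n.  An element is its coefficient vector (a_A) indexed
by subsets A of the generator set; e_A = e_{j1}...e_{jk} with j1 < ... < jk.\<close>

type_synonym 'n clif = "real ^ ('n set)"

definition cbasis :: "'n::{finite,linorder} set \<Rightarrow> 'n::{finite,linorder} clif" where
  "cbasis A = (\<chi> B. if B = A then 1 else 0)"

text \<open>Sign in e_A e_B = csign A B e_{A symdiff B}, using e_j e_k = - e_k e_j (j \<noteq> k)
and e_j e_j = -1.\<close>
definition csign :: "'n::{finite,linorder} set \<Rightarrow> 'n::{finite,linorder} set \<Rightarrow> real" where
  "csign A B = (-1) ^ (card {(a, b). a \<in> A \<and> b \<in> B \<and> b < a} + card (A \<inter> B))"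

definition cmul :: "'n::{finite,linorder} clif \<Rightarrow> 'n::{finite,linorder} clif \<Rightarrow> 'n::{finite,linorder} clif" (infixl "\<odot>" 70) where
  "u \<odot> v = (\<chi> C. \<Sum>A\<in>UNIV. csign A (A - C \<union> (C - A)) * (u $ A) * (v $ (A - C \<union> (C - A))))"

definition cvec :: "real ^ 'n::{finite,linorder} \<Rightarrow> 'n::{finite,linorder} clif" where
  "cvec x = (\<Sum>j\<in>UNIV. (x $ j) *\<^sub>R cbasis {j})"

definition kvector :: "nat \<Rightarrow> 'n::{finite,linorder} clif \<Rightarrow> bool" where
  "kvector k u \<longleftrightarrow> (\<forall>A. card A \<noteq> k \<longrightarrow> u $ A = 0)"

definition pd :: "'n::{finite,linorder} \<Rightarrow> (real ^ 'n::{finite,linorder} \<Rightarrow> 'b::real_normed_vector) \<Rightarrow> real ^ 'n::{finite,linorder} \<Rightarrow> 'b" where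
  "pd j f x = vector_derivative (\<lambda>t. f (x + t *\<^sub>R axis j 1)) (at 0)"

fun Ck_on :: "nat \<Rightarrow> (real ^ 'n::{finite,linorder}) set \<Rightarrow> (real ^ 'n::{finite,linorder} \<Rightarrow> 'b::real_normed_vector) \<Rightarrow> bool" where
  "Ck_on 0 \<Omega> f = continuous_on \<Omega> f"
| "Ck_on (Suc k) \<Omega> f = (continuous_on \<Omega> f \<and>
     (\<forall>j. (\<forall>x\<in>\<Omega>. (\<lambda>t. f (x + t *\<^sub>R axis j 1)) differentiable (at 0)) \<and> Ck_on k \<Omega> (pd j f)))"

definition dirac_l :: "(real ^ 'n::{finite,linorder} \<Rightarrow> 'n::{finite,linorder} clif) \<Rightarrow> real ^ 'n::{finite,linorder} \<Rightarrow> 'n::{finite,linorder} clif" where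
  "dirac_l f x = (\<Sum>j\<in>UNIV. cbasis {j} \<odot> pd j f x)"

definition dirac_r :: "(real ^ 'n::{finite,linorder} \<Rightarrow> 'n::{finite,linorder} clif) \<Rightarrow> real ^ 'n::{finite,linorder} \<Rightarrow> 'n::{finite,linorder} clif" where
  "dirac_r f x = (\<Sum>j\<in>UNIV. pd j f x \<odot> cbasis {j})"

definition inframonogenic :: "(real ^ 'n::{finite,linorder}) set \<Rightarrow> (real ^ 'n::{finite,linorder} \<Rightarrow> 'n::{finite,linorder} clif) \<Rightarrow> bool" where
  "inframonogenic \<Omega> f \<longleftrightarrow> (\<forall>x\<in>\<Omega>. dirac_r (dirac_l f) x = 0)"

definition left_monogenic_k :: "nat \<Rightarrow> (real ^ 'n::{finite,linorder}) set \<Rightarrow> (real ^ 'n::{finite,linorder} \<Rightarrow> 'n::{finite,linorder} clif) \<Rightarrow> bool" where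
  "left_monogenic_k k \<Omega> f \<longleftrightarrow> (\<forall>x\<in>\<Omega>. (dirac_l ^^ k) f x = 0)"

definition right_monogenic_k :: "nat \<Rightarrow> (real ^ 'n::{finite,linorder}) set \<Rightarrow> (real ^ 'n::{finite,linorder} \<Rightarrow> 'n::{finite,linorder} clif) \<Rightarrow> bool" where
  "right_monogenic_k k \<Omega> f \<longleftrightarrow> (\<forall>x\<in>\<Omega>. (dirac_r ^^ k) f x = 0)"

end

theory Submission
  imports Defs
begin

text \<open>
  Everything is reduced to pointwise identities between the partial derivatives of F
  of order two and three, written as coefficient sums over the generators e_j:
  \<^item> Clifford algebra: the generator relations e_i e_j + e_j e_i = -2\<delta>_ij, associativity
    of products with generators, and the sandwich identity \<Sum>_j e_j u e_j = (-1)^k (2k - m) u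
    for k-vectors u, which vanishes for k = m/2;
  \<^item> contraction identities for symmetric coefficient families, from which
    \<partial>^3(F x) = (\<partial>^3F) x - 2 \<partial>F\<partial> and (x F)\<partial>^3 = x (F\<partial>^3) - 2 \<partial>F\<partial> for (m/2)-vector valued F,
    and \<partial>^3F = (\<partial>F\<partial>)\<partial>, F\<partial>^3 = \<partial>(\<partial>F\<partial>) in general;
  \<^item> calculus: partial derivatives with product rules and locality, and Clairaut's theorem
    making the higher partials symmetric.
\<close>

abbreviation e :: "'n::{finite,linorder} \<Rightarrow> 'n clif" where "e j \<equiv> cbasis {j}"

lemma cmul_add_left: "(u + v) \<odot> w = u \<odot> w + v \<odot> w"
  by (simp add: vec_eq_iff cmul_def sum.distrib algebra_simps)
lemma cmul_add_right: "w \<odot> (u + v) = w \<odot> u + w \<odot> v"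
  by (simp add: vec_eq_iff cmul_def sum.distrib algebra_simps)
lemma cmul_scaleR_left: "(r *\<^sub>R u) \<odot> w = r *\<^sub>R (u \<odot> w)"
  by (simp add: vec_eq_iff cmul_def sum_distrib_left algebra_simps)
lemma cmul_scaleR_right: "w \<odot> (r *\<^sub>R u) = r *\<^sub>R (w \<odot> u)"
  by (simp add: vec_eq_iff cmul_def sum_distrib_left algebra_simps)
lemma cmul_zero_left [simp]: "0 \<odot> w = 0"
  by (simp add: vec_eq_iff cmul_def)
lemma cmul_zero_right [simp]: "w \<odot> 0 = 0"
  by (simp add: vec_eq_iff cmul_def)
lemma cmul_minus_left: "(- u) \<odot> w = - (u \<odot> w)"
  by (simp add: vec_eq_iff cmul_def sum_negf)
lemma cmul_minus_right: "w \<odot> (- u) = - (w \<odot> u)"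
  by (simp add: vec_eq_iff cmul_def sum_negf)
lemma cmul_sum_left: "(\<Sum>i\<in>I. f i) \<odot> w = (\<Sum>i\<in>I. f i \<odot> w)"
  by (induction I rule: infinite_finite_induct) (simp_all add: cmul_add_left)
lemma cmul_sum_right: "w \<odot> (\<Sum>i\<in>I. f i) = (\<Sum>i\<in>I. w \<odot> f i)"
  by (induction I rule: infinite_finite_induct) (simp_all add: cmul_add_right)

lemmas cmul_lin = cmul_add_left cmul_add_right cmul_scaleR_left cmul_scaleR_right
  cmul_minus_left cmul_minus_right cmul_sum_left cmul_sum_right

text \<open>Bounded bilinearity is what makes the product rule available for derivatives.\<close>

lemma bounded_bilinear_cmul: "bounded_bilinear (\<odot>)"
  by (simp add: bilinear_conv_bounded_bilinear[symmetric] bilinear_def linear_iff cmul_lin)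

lemma clif_basis_expansion: "u = (\<Sum>A\<in>UNIV. u $ A *\<^sub>R cbasis A)"
proof -
  have "(\<Sum>B\<in>UNIV. u $ B * (if A = B then 1 else 0)) = u $ A" for A
  proof -
    have "(\<Sum>B\<in>UNIV. u $ B * (if A = B then 1 else 0)) = (\<Sum>B\<in>UNIV. if A = B then u $ B else 0)"
      by (rule sum.cong) auto
    then show ?thesis by simp
  qed
  then show ?thesis by (simp add: vec_eq_iff cbasis_def)
qed

lemma clif_linear_ext:
  fixes f g :: "'n::{finite,linorder} clif \<Rightarrow> 'm::real_vector"
  assumes "\<And>u v. f (u + v) = f u + f v" "\<And>r u. f (r *\<^sub>R u) = r *\<^sub>R f u"
    and "\<And>u v. g (u + v) = g u + g v" "\<And>r u. g (r *\<^sub>R u) = r *\<^sub>R g u"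
    and "\<And>A. f (cbasis A) = g (cbasis A)"
  shows "f u = g u"
proof -
  have "f 0 = 0" "g 0 = 0" using assms(2)[of 0 0] assms(4)[of 0 0] by simp_all
  then have "f (\<Sum>A\<in>S. u $ A *\<^sub>R cbasis A) = g (\<Sum>A\<in>S. u $ A *\<^sub>R cbasis A)" for S
    by (induction S rule: infinite_finite_induct) (simp_all add: assms)
  then show ?thesis by (metis clif_basis_expansion)
qed

lemma cbasis_mul: "cbasis A \<odot> cbasis B = csign A B *\<^sub>R cbasis (sym_diff A B)"
proof -
  have sd: "(sym_diff A C = B) \<longleftrightarrow> (C = sym_diff A B)" "sym_diff A (sym_diff A B) = B" for C
    by blast+
  have "(cbasis A \<odot> cbasis B) $ C =
      (\<Sum>A'\<in>UNIV. if A' = A then csign A (sym_diff A C) * (if sym_diff A C = B then 1 else 0) else 0)" for C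
    unfolding cmul_def cbasis_def vec_lambda_beta by (rule sum.cong) auto
  then show ?thesis by (auto simp: vec_eq_iff cbasis_def sd)
qed

lemma csign_singleton_left: "csign {i} B = (-1) ^ (card {b\<in>B. b < i} + (if i \<in> B then 1 else 0))"
proof -
  have "{(a, b). a \<in> {i} \<and> b \<in> B \<and> b < a} = Pair i ` {b\<in>B. b < i}" by auto
  then have "card {(a, b). a \<in> {i} \<and> b \<in> B \<and> b < a} = card {b\<in>B. b < i}"
    by (simp add: card_image inj_on_def)
  moreover have "card ({i} \<inter> B) = (if i \<in> B then 1 else 0)" by auto
  ultimately show ?thesis by (simp add: csign_def)
qed

lemma csign_singleton_right: "csign B {j} = (-1) ^ (card {a\<in>B. j < a} + (if j \<in> B then 1 else 0))"
proof -
  have "{(a, b). a \<in> B \<and> b \<in> {j} \<and> b < a} = (\<lambda>a. (a, j)) ` {a\<in>B. j < a}" by auto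
  then have "card {(a, b). a \<in> B \<and> b \<in> {j} \<and> b < a} = card {a\<in>B. j < a}"
    by (simp add: card_image inj_on_def)
  moreover have "card (B \<inter> {j}) = (if j \<in> B then 1 else 0)" by auto
  ultimately show ?thesis by (simp add: csign_def)
qed

lemma csign_square: "csign A B * csign A B = 1"
  by (simp add: csign_def flip: power_mult_distrib)

lemma csign_left_toggle:
  fixes i j :: "'n::{finite,linorder}"
  assumes "i \<noteq> j"
  shows "csign {i} (sym_diff B {j}) = (if j < i then -1 else 1) * csign {i} B"
proof -
  have ins: "csign {i} (insert j C) = (if j < i then -1 else 1) * csign {i} C" if "j \<notin> C" for C
  proof -
    have "card {b \<in> insert j C. b < i} = card {b\<in>C. b < i} + (if j < i then 1 else 0)"
    proof (cases "j < i")
      case True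
      then have "{b \<in> insert j C. b < i} = insert j {b\<in>C. b < i}" by auto
      then show ?thesis using True \<open>j \<notin> C\<close> by simp
    next
      case False
      then have "{b \<in> insert j C. b < i} = {b\<in>C. b < i}" by auto
      then show ?thesis using False by simp
    qed
    then show ?thesis using assms by (simp add: csign_singleton_left power_add)
  qed
  show ?thesis
  proof (cases "j \<in> B")
    case True
    then have "B = insert j (B - {j})" "sym_diff B {j} = B - {j}" by auto
    moreover have "csign {i} (insert j (B - {j})) = (if j < i then -1 else 1) * csign {i} (B - {j})"
      by (rule ins) simp
    ultimately show ?thesis by auto
  next
    case False
    then have "sym_diff B {j} = insert j B" by auto
    then show ?thesis using ins[OF False] by simp
  qed
qed

lemma csign_right_toggle:
  fixes i j :: "'n::{finite,linorder}"
  assumes "i \<noteq> j"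
  shows "csign (sym_diff B {i}) {j} = (if j < i then -1 else 1) * csign B {j}"
proof -
  have ins: "csign (insert i C) {j} = (if j < i then -1 else 1) * csign C {j}" if "i \<notin> C" for C
  proof -
    have "card {b \<in> insert i C. j < b} = card {b\<in>C. j < b} + (if j < i then 1 else 0)"
    proof (cases "j < i")
      case True
      then have "{b \<in> insert i C. j < b} = insert i {b\<in>C. j < b}" by auto
      then show ?thesis using True \<open>i \<notin> C\<close> by simp
    next
      case False
      then have "{b \<in> insert i C. j < b} = {b\<in>C. j < b}" by auto
      then show ?thesis using False by simp
    qed
    then show ?thesis using assms by (simp add: csign_singleton_right power_add)
  qed
  show ?thesis
  proof (cases "i \<in> B")
    case True
    then have "B = insert i (B - {i})" "sym_diff B {i} = B - {i}" by auto
    moreover have "csign (insert i (B - {i})) {j} = (if j < i then -1 else 1) * csign (B - {i}) {j}"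
      by (rule ins) simp
    ultimately show ?thesis by auto
  next
    case False
    then have "sym_diff B {i} = insert i B" by auto
    then show ?thesis using ins[OF False] by simp
  qed
qed

lemma csign_left_self: "csign {i} (sym_diff B {i::'n::{finite,linorder}}) = - csign {i} B"
proof -
  have "{b\<in>sym_diff B {i}. b < i} = {b\<in>B. b < i}" by auto
  then show ?thesis unfolding csign_singleton_left by (simp add: power_add)
qed

lemma csign_right_self: "csign (sym_diff B {j}) {j::'n::{finite,linorder}} = - csign B {j}"
proof -
  have "{b\<in>sym_diff B {j}. j < b} = {b\<in>B. j < b}" by auto
  then show ?thesis unfolding csign_singleton_right by (simp add: power_add)
qed

lemma sym_diff_singleton_twice [simp]: "sym_diff (sym_diff A {j}) {j} = A"
  by blast

lemma sym_diff_singleton_swap: "sym_diff (sym_diff A {i}) {j} = sym_diff (sym_diff A {j}) {i}"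
  by blast

lemma e_e_cbasis: "e i \<odot> (e j \<odot> cbasis A) =
    (csign {j} A * csign {i} (sym_diff A {j})) *\<^sub>R cbasis (sym_diff (sym_diff A {j}) {i})"
  by (simp add: cbasis_mul Un_commute cmul_scaleR_right)

lemma cbasis_e_e: "(cbasis A \<odot> e i) \<odot> e j =
    (csign A {i} * csign (sym_diff A {i}) {j}) *\<^sub>R cbasis (sym_diff (sym_diff A {i}) {j})"
  by (simp add: cbasis_mul cmul_scaleR_left)

lemma e_cbasis_e: "e i \<odot> (cbasis A \<odot> e j) =
    (csign A {j} * csign {i} (sym_diff A {j})) *\<^sub>R cbasis (sym_diff (sym_diff A {j}) {i})"
  by (simp add: cbasis_mul Un_commute cmul_scaleR_right)

lemma e_cbasis_e': "(e i \<odot> cbasis A) \<odot> e j =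
    (csign {i} A * csign (sym_diff A {i}) {j}) *\<^sub>R cbasis (sym_diff (sym_diff A {i}) {j})"
  by (simp add: cbasis_mul Un_commute cmul_scaleR_left)

lemma anticomm_left_cbasis:
  "e i \<odot> (e j \<odot> cbasis A) + e j \<odot> (e i \<odot> cbasis A) = (if i = j then -2 else 0) *\<^sub>R cbasis A"
proof (cases "i = j")
  case True
  have "e i \<odot> (e i \<odot> cbasis A) = - cbasis A"
    unfolding e_e_cbasis csign_left_self sym_diff_singleton_twice using csign_square[of "{i}" A] by simp
  then show ?thesis using True by (simp add: scaleR_2)
next
  case False
  have "csign {j} A * ((if j < i then -1 else 1) * csign {i} A)
      + csign {i} A * ((if i < j then -1 else 1) * csign {j} A) = 0"
    using False by (cases "i < j") (auto simp: linorder_neq_iff)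
  then show ?thesis using False
    unfolding e_e_cbasis csign_left_toggle[OF False] csign_left_toggle[OF not_sym[OF False]]
      sym_diff_singleton_swap[of A i j] scaleR_add_left[symmetric] by simp
qed

lemma anticomm_right_cbasis:
  "(cbasis A \<odot> e i) \<odot> e j + (cbasis A \<odot> e j) \<odot> e i = (if i = j then -2 else 0) *\<^sub>R cbasis A"
proof (cases "i = j")
  case True
  have "(cbasis A \<odot> e i) \<odot> e i = - cbasis A"
    unfolding cbasis_e_e csign_right_self using csign_square[of A "{i}"] by simp
  then show ?thesis using True by (simp add: scaleR_2)
next
  case False
  have "csign A {i} * ((if j < i then -1 else 1) * csign A {j})
      + csign A {j} * ((if i < j then -1 else 1) * csign A {i}) = 0"
    using False by (cases "i < j") (auto simp: linorder_neq_iff)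
  then show ?thesis using False
    unfolding cbasis_e_e csign_right_toggle[OF False] csign_right_toggle[OF not_sym[OF False]]
      sym_diff_singleton_swap[of A j i] scaleR_add_left[symmetric] by simp
qed

lemma assoc_cbasis: "e i \<odot> (cbasis A \<odot> e j) = (e i \<odot> cbasis A) \<odot> e j"
proof (cases "i = j")
  case True
  then show ?thesis by (simp add: e_cbasis_e e_cbasis_e' csign_right_self csign_left_self)
next
  case False
  show ?thesis
    unfolding e_cbasis_e e_cbasis_e' csign_right_toggle[OF False] csign_left_toggle[OF False]
      sym_diff_singleton_swap[of A j i]
    by (simp add: algebra_simps)
qed

lemma sandwich_cbasis:
  "e j \<odot> (cbasis A \<odot> e j) = (if j \<in> A then (-1) ^ card A else - ((-1) ^ card A)) *\<^sub>R cbasis A"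
proof -
  have split: "card {a\<in>A. j < a} + card {a\<in>A. a < j} + (if j \<in> A then 1 else 0) = card A"
  proof -
    have "A = ({a\<in>A. j < a} \<union> {a\<in>A. a < j}) \<union> (A \<inter> {j})" by auto
    also have "card \<dots> = card ({a\<in>A. j < a} \<union> {a\<in>A. a < j}) + card (A \<inter> {j})"
      by (rule card_Un_disjoint) auto
    also have "card ({a\<in>A. j < a} \<union> {a\<in>A. a < j}) = card {a\<in>A. j < a} + card {a\<in>A. a < j}"
      by (rule card_Un_disjoint) auto
    finally show ?thesis by auto
  qed
  have "{b\<in>sym_diff A {j}. b < j} = {b\<in>A. b < j}" by auto
  then have "csign A {j} * csign {j} (sym_diff A {j}) = (-1) ^ (card A + (if j \<in> A then 0 else 1))"
    unfolding csign_singleton_left csign_singleton_right split[symmetric] by (simp add: power_add)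
  then show ?thesis unfolding e_cbasis_e by (simp add: power_add)
qed

lemma anticomm_left: "e i \<odot> (e j \<odot> u) + e j \<odot> (e i \<odot> u) = (if i = j then -2 else 0) *\<^sub>R u"
  by (rule clif_linear_ext[where u=u]) (simp_all add: cmul_lin anticomm_left_cbasis algebra_simps)

lemma anticomm_right: "(u \<odot> e i) \<odot> e j + (u \<odot> e j) \<odot> e i = (if i = j then -2 else 0) *\<^sub>R u"
  by (rule clif_linear_ext[where u=u]) (simp_all add: cmul_lin anticomm_right_cbasis algebra_simps)

lemma assoc_gen: "e i \<odot> (u \<odot> e j) = (e i \<odot> u) \<odot> e j"
  by (rule clif_linear_ext[where u=u]) (simp_all add: cmul_lin assoc_cbasis algebra_simps)

lemma cvec_expansion: "cvec x = (\<Sum>k\<in>UNIV. (x $ k) *\<^sub>R e k)"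
  by (simp add: cvec_def)

lemma assoc_cvec_left: "e i \<odot> (u \<odot> cvec x) = (e i \<odot> u) \<odot> cvec x"
  by (simp add: cvec_expansion cmul_lin assoc_gen)

lemma assoc_cvec_right: "(cvec x \<odot> u) \<odot> e i = cvec x \<odot> (u \<odot> e i)"
  by (simp add: cvec_expansion cmul_lin assoc_gen)

text \<open>In particular it annihilates the (m/2)-vectors: this is where
  the hypothesis on the grade of F enters.\<close>

lemma sandwich_sum_cbasis:
  "(\<Sum>j\<in>UNIV. e j \<odot> (cbasis A \<odot> e j)) =
     ((-1) ^ card A * (2 * real (card A) - real CARD('n))) *\<^sub>R (cbasis A :: 'n::{finite,linorder} clif)"
proof -
  have "(\<Sum>j\<in>UNIV. (if j \<in> A then (-1) ^ card A else - ((-1) ^ card A)) :: real)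
      = (\<Sum>j\<in>A. (-1) ^ card A) + (\<Sum>j\<in>- A. - ((-1) ^ card A))"
    by (subst sum.If_cases) (simp_all add: Int_def Compl_eq)
  also have "\<dots> = (-1) ^ card A * (real (card A) - real (card (- A)))"
    by (simp add: algebra_simps)
  also have "real (card (- A)) = real CARD('n) - real (card A)"
    using card_mono[of UNIV A] by (simp add: Compl_eq_Diff_UNIV card_Diff_subset of_nat_diff)
  finally have "(\<Sum>j\<in>UNIV. (if j \<in> A then (-1) ^ card A else - ((-1) ^ card A)) :: real)
      = (-1) ^ card A * (2 * real (card A) - real CARD('n))"
    by (simp add: algebra_simps)
  then show ?thesis
    by (simp only: sandwich_cbasis scaleR_sum_left[symmetric])
qed

lemma sandwich_sum_kvector:
  assumes "kvector k u"
  shows "(\<Sum>j\<in>UNIV. e j \<odot> (u \<odot> e j)) = ((-1) ^ k * (2 * real k - real CARD('n))) *\<^sub>R (u :: 'n::{finite,linorder} clif)"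
proof -
  have "(\<Sum>j\<in>UNIV. e j \<odot> (u \<odot> e j)) = (\<Sum>j\<in>UNIV. \<Sum>A\<in>UNIV. u $ A *\<^sub>R (e j \<odot> (cbasis A \<odot> e j)))"
    by (subst (1) clif_basis_expansion) (simp only: cmul_sum_left cmul_sum_right cmul_scaleR_left cmul_scaleR_right)
  also have "\<dots> = (\<Sum>A\<in>UNIV. u $ A *\<^sub>R (\<Sum>j\<in>UNIV. e j \<odot> (cbasis A \<odot> e j)))"
    by (subst sum.swap) (simp only: scaleR_sum_right)
  also have "\<dots> = (\<Sum>A\<in>UNIV. ((-1) ^ k * (2 * real k - real CARD('n))) *\<^sub>R (u $ A *\<^sub>R cbasis A))"
    using assms by (intro sum.cong refl) (auto simp: sandwich_sum_cbasis kvector_def)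
  also have "\<dots> = ((-1) ^ k * (2 * real k - real CARD('n))) *\<^sub>R u"
    by (subst (2) clif_basis_expansion) (simp add: scaleR_sum_right)
  finally show ?thesis .
qed

lemma sandwich_sum_half_grade:
  assumes "even CARD('n)" "kvector (CARD('n) div 2) u"
  shows "(\<Sum>j\<in>UNIV. e j \<odot> (u \<odot> e j)) = (0 :: 'n::{finite,linorder} clif)"
  using sandwich_sum_kvector[OF assms(2)] assms(1) by (simp add: real_of_nat_div)

lemma sandwich_sum_half_grade':
  assumes "even CARD('n)" "kvector (CARD('n) div 2) u"
  shows "(\<Sum>j\<in>UNIV. (e j \<odot> u) \<odot> e j) = (0 :: 'n::{finite,linorder} clif)"
  using sandwich_sum_half_grade[OF assms] by (simp add: assoc_gen)

text \<open>Against two generators, a symmetric family contracts to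
  minus its trace (at the level of partials: \<partial>\<partial> = -\<Delta>), and interchanging the two
  generators costs a trace term.\<close>

lemma anticomm_left': "e i \<odot> (e j \<odot> u) = (if i = j then -2 else 0) *\<^sub>R u - e j \<odot> (e i \<odot> u)"
  using anticomm_left[of i j u] by (simp add: algebra_simps)

lemma anticomm_right': "(u \<odot> e j) \<odot> e i = (if i = j then -2 else 0) *\<^sub>R u - (u \<odot> e i) \<odot> e j"
  using anticomm_right[of u j i] by (auto simp: algebra_simps)

lemma add_self_eq_neg_two: fixes x y :: "'a::real_vector" assumes "x + x = (-2) *\<^sub>R y" shows "x = - y"
proof -
  have "(2::real) *\<^sub>R x = 2 *\<^sub>R (- y)" using assms by (simp add: scaleR_2)
  then show ?thesis by (rule scaleR_left_imp_eq[rotated]) simp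
qed

lemma sum_kronecker_scaleR: "(\<Sum>j\<in>UNIV. (if (i::'b::finite) = j then r else 0) *\<^sub>R w j) = r *\<^sub>R (w i :: 'a::real_vector)"
proof -
  have "(\<Sum>j\<in>UNIV. (if i = j then r else 0) *\<^sub>R w j) = (\<Sum>j\<in>UNIV. if i = j then r *\<^sub>R w j else 0)"
    by (rule sum.cong) auto
  then show ?thesis by simp
qed

lemma contract_symmetric_left:
  assumes "\<And>i j. w i j = w j i"
  shows "(\<Sum>i\<in>UNIV. \<Sum>j\<in>UNIV. e i \<odot> (e j \<odot> w i j)) = - (\<Sum>i\<in>UNIV. w i i)"
proof -
  let ?S = "(\<Sum>i\<in>UNIV. \<Sum>j\<in>UNIV. e i \<odot> (e j \<odot> w i j))"
  have "?S = (\<Sum>i\<in>UNIV. \<Sum>j\<in>UNIV. e j \<odot> (e i \<odot> w j i))" by (rule sum.swap)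
  also have "\<dots> = (\<Sum>i\<in>UNIV. \<Sum>j\<in>UNIV. e j \<odot> (e i \<odot> w i j))" using assms by simp
  finally have "?S + ?S = (\<Sum>i\<in>UNIV. \<Sum>j\<in>UNIV. e i \<odot> (e j \<odot> w i j) + e j \<odot> (e i \<odot> w i j))"
    by (simp add: sum.distrib)
  also have "\<dots> = (\<Sum>i\<in>UNIV. \<Sum>j\<in>UNIV. (if i = j then -2 else 0) *\<^sub>R w i j)"
    by (simp only: anticomm_left)
  also have "\<dots> = (\<Sum>i\<in>UNIV. (-2) *\<^sub>R w i i)" by (simp only: sum_kronecker_scaleR)
  also have "\<dots> = (-2) *\<^sub>R (\<Sum>i\<in>UNIV. w i i)" by (simp only: scaleR_sum_right)
  finally show ?thesis by (rule add_self_eq_neg_two)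
qed

lemma contract_symmetric_right:
  assumes "\<And>i j. w i j = w j i"
  shows "(\<Sum>i\<in>UNIV. \<Sum>j\<in>UNIV. (w i j \<odot> e j) \<odot> e i) = - (\<Sum>i\<in>UNIV. w i i)"
proof -
  let ?S = "(\<Sum>i\<in>UNIV. \<Sum>j\<in>UNIV. (w i j \<odot> e j) \<odot> e i)"
  have "?S = (\<Sum>i\<in>UNIV. \<Sum>j\<in>UNIV. (w j i \<odot> e i) \<odot> e j)" by (rule sum.swap)
  also have "\<dots> = (\<Sum>i\<in>UNIV. \<Sum>j\<in>UNIV. (w i j \<odot> e i) \<odot> e j)" using assms by simp
  finally have "?S + ?S = (\<Sum>i\<in>UNIV. \<Sum>j\<in>UNIV. (w i j \<odot> e j) \<odot> e i + (w i j \<odot> e i) \<odot> e j)"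
    by (simp add: sum.distrib)
  also have "\<dots> = (\<Sum>i\<in>UNIV. \<Sum>j\<in>UNIV. (if j = i then -2 else 0) *\<^sub>R w i j)"
    by (simp only: anticomm_right)
  also have "\<dots> = (\<Sum>i\<in>UNIV. \<Sum>j\<in>UNIV. (if i = j then -2 else 0) *\<^sub>R w i j)"
    by (simp only: eq_commute)
  also have "\<dots> = (\<Sum>i\<in>UNIV. (-2) *\<^sub>R w i i)" by (simp only: sum_kronecker_scaleR)
  also have "\<dots> = (-2) *\<^sub>R (\<Sum>i\<in>UNIV. w i i)" by (simp only: scaleR_sum_right)
  finally show ?thesis by (rule add_self_eq_neg_two)
qed

lemma swap_generators_left: "(\<Sum>i\<in>UNIV. \<Sum>j\<in>UNIV. e i \<odot> (e j \<odot> v i j)) =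
   (\<Sum>i\<in>UNIV. (-2) *\<^sub>R v i i) - (\<Sum>i\<in>UNIV. \<Sum>j\<in>UNIV. e j \<odot> (e i \<odot> v i j))"
proof -
  have "(\<Sum>i\<in>UNIV. \<Sum>j\<in>UNIV. e i \<odot> (e j \<odot> v i j)) =
     (\<Sum>i\<in>UNIV. \<Sum>j\<in>UNIV. (if i = j then -2 else 0) *\<^sub>R v i j - e j \<odot> (e i \<odot> v i j))"
    by (intro sum.cong refl) (rule anticomm_left')
  also have "\<dots> = (\<Sum>i\<in>UNIV. (-2) *\<^sub>R v i i) - (\<Sum>i\<in>UNIV. \<Sum>j\<in>UNIV. e j \<odot> (e i \<odot> v i j))"
    by (simp only: sum_subtractf sum_kronecker_scaleR)
  finally show ?thesis .
qed

lemma swap_generators_right: "(\<Sum>i\<in>UNIV. \<Sum>j\<in>UNIV. (v i j \<odot> e j) \<odot> e i) =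
   (\<Sum>i\<in>UNIV. (-2) *\<^sub>R v i i) - (\<Sum>i\<in>UNIV. \<Sum>j\<in>UNIV. (v i j \<odot> e i) \<odot> e j)"
proof -
  have "(\<Sum>i\<in>UNIV. \<Sum>j\<in>UNIV. (v i j \<odot> e j) \<odot> e i) =
     (\<Sum>i\<in>UNIV. \<Sum>j\<in>UNIV. (if i = j then -2 else 0) *\<^sub>R v i j - (v i j \<odot> e i) \<odot> e j)"
    by (intro sum.cong refl) (rule anticomm_right')
  also have "\<dots> = (\<Sum>i\<in>UNIV. (-2) *\<^sub>R v i i) - (\<Sum>i\<in>UNIV. \<Sum>j\<in>UNIV. (v i j \<odot> e i) \<odot> e j)"
    by (simp only: sum_subtractf sum_kronecker_scaleR)
  finally show ?thesis .
qed

text \<open>Coefficient form of the third powers of the Dirac operators: for a family P l i j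
  (the third partials \<partial>_l\<partial>_i\<partial>_j F at a point, or the terms the product rule produces from
  them) these are \<Sum> e_l e_i e_j P_lij and \<Sum> P_lij e_j e_i e_l.\<close>

definition triple_left :: "('n::{finite,linorder} \<Rightarrow> 'n \<Rightarrow> 'n \<Rightarrow> 'n clif) \<Rightarrow> 'n clif" where
  "triple_left P = (\<Sum>l\<in>UNIV. e l \<odot> (\<Sum>i\<in>UNIV. e i \<odot> (\<Sum>j\<in>UNIV. e j \<odot> P l i j)))"

definition triple_right :: "('n::{finite,linorder} \<Rightarrow> 'n \<Rightarrow> 'n \<Rightarrow> 'n clif) \<Rightarrow> 'n clif" where
  "triple_right P = (\<Sum>l\<in>UNIV. (\<Sum>i\<in>UNIV. (\<Sum>j\<in>UNIV. P l i j \<odot> e j) \<odot> e i) \<odot> e l)"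

lemma triple_left_add: "triple_left (\<lambda>l i j. P l i j + Q l i j) = triple_left P + triple_left Q"
  unfolding triple_left_def by (simp only: cmul_add_right sum.distrib)

lemma triple_right_add: "triple_right (\<lambda>l i j. P l i j + Q l i j) = triple_right P + triple_right Q"
  unfolding triple_right_def by (simp only: cmul_add_left sum.distrib)

lemma triple_left_mul_cvec: "triple_left (\<lambda>l i j. P l i j \<odot> cvec x) = triple_left P \<odot> cvec x"
  unfolding triple_left_def by (simp only: cmul_sum_left cmul_sum_right assoc_cvec_left)

lemma triple_right_cvec_mul: "triple_right (\<lambda>l i j. cvec x \<odot> P l i j) = cvec x \<odot> triple_right P"
  unfolding triple_right_def by (simp only: cmul_sum_left cmul_sum_right assoc_cvec_right)

text \<open>Applying the product rule to F x (or x F) produces terms b_ij e_k in which a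
  generator multiplies a second partial b_ij of F from the right (or left).  For symmetric
  (m/2)-vector valued b, two of the three placements of the generator are annihilated by the
  sandwich identity; the third yields -2 times the coefficient form of \<partial>F\<partial>.\<close>

lemma triple_left_sandwich_inner:
  assumes ev: "even CARD('n)" and bk: "\<And>i j. kvector (CARD('n) div 2) (b i j :: 'n::{finite,linorder} clif)"
  shows "triple_left (\<lambda>l i j. b l i \<odot> e j) = 0"
  unfolding triple_left_def by (simp only: sandwich_sum_half_grade[OF ev bk] cmul_zero_right sum.neutral_const)

lemma triple_right_sandwich_inner:
  assumes ev: "even CARD('n)" and bk: "\<And>i j. kvector (CARD('n) div 2) (b i j :: 'n::{finite,linorder} clif)"
  shows "triple_right (\<lambda>l i j. e j \<odot> b l i) = 0"
  unfolding triple_right_def by (simp only: sandwich_sum_half_grade'[OF ev bk] cmul_zero_left sum.neutral_const)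

lemma triple_left_sandwich_outer:
  assumes ev: "even CARD('n)" and bk: "\<And>i j. kvector (CARD('n) div 2) (b i j :: 'n::{finite,linorder} clif)"
    and bs: "\<And>i j. b i j = b j i"
  shows "triple_left (\<lambda>l i j. b i j \<odot> e l) = 0"
proof -
  have inner: "(\<Sum>i\<in>UNIV. e i \<odot> (\<Sum>j\<in>UNIV. e j \<odot> (b i j \<odot> e l))) = - (\<Sum>i\<in>UNIV. b i i \<odot> e l)" for l
    using contract_symmetric_left[of "\<lambda>i j. b i j \<odot> e l"] bs by (simp only: cmul_sum_right)
  have "triple_left (\<lambda>l i j. b i j \<odot> e l) = - (\<Sum>l\<in>UNIV. \<Sum>i\<in>UNIV. e l \<odot> (b i i \<odot> e l))"
    unfolding triple_left_def inner by (simp only: cmul_sum_right cmul_minus_right sum_negf)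
  also have "\<dots> = - (\<Sum>i\<in>UNIV. \<Sum>l\<in>UNIV. e l \<odot> (b i i \<odot> e l))"
    by (subst sum.swap) (rule refl)
  also have "\<dots> = 0"
    by (simp only: sandwich_sum_half_grade[OF ev bk] sum.neutral_const minus_zero)
  finally show ?thesis .
qed

lemma triple_right_sandwich_outer:
  assumes ev: "even CARD('n)" and bk: "\<And>i j. kvector (CARD('n) div 2) (b i j :: 'n::{finite,linorder} clif)"
    and bs: "\<And>i j. b i j = b j i"
  shows "triple_right (\<lambda>l i j. e l \<odot> b i j) = 0"
proof -
  have inner: "(\<Sum>i\<in>UNIV. (\<Sum>j\<in>UNIV. (e l \<odot> b i j) \<odot> e j) \<odot> e i) = - (\<Sum>i\<in>UNIV. e l \<odot> b i i)" for l
    using contract_symmetric_right[of "\<lambda>i j. e l \<odot> b i j"] bs by (simp only: cmul_sum_left)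
  have "triple_right (\<lambda>l i j. e l \<odot> b i j) = - (\<Sum>l\<in>UNIV. \<Sum>i\<in>UNIV. (e l \<odot> b i i) \<odot> e l)"
    unfolding triple_right_def inner by (simp only: cmul_sum_left cmul_minus_left sum_negf)
  also have "\<dots> = - (\<Sum>i\<in>UNIV. \<Sum>l\<in>UNIV. (e l \<odot> b i i) \<odot> e l)"
    by (subst sum.swap) (rule refl)
  also have "\<dots> = 0"
    by (simp only: sandwich_sum_half_grade'[OF ev bk] sum.neutral_const minus_zero)
  finally show ?thesis .
qed

lemma triple_left_sandwich_middle:
  assumes ev: "even CARD('n)" and bk: "\<And>i j. kvector (CARD('n) div 2) (b i j :: 'n::{finite,linorder} clif)"
    and bs: "\<And>i j. b i j = b j i"
  shows "triple_left (\<lambda>l i j. b l j \<odot> e i) = (-2) *\<^sub>R (\<Sum>j\<in>UNIV. (\<Sum>i\<in>UNIV. e i \<odot> b j i) \<odot> e j)"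
proof -
  have inner: "(\<Sum>i\<in>UNIV. e i \<odot> (\<Sum>j\<in>UNIV. e j \<odot> (b l j \<odot> e i))) = (-2) *\<^sub>R (\<Sum>i\<in>UNIV. b l i \<odot> e i)" for l
  proof -
    have "(\<Sum>i\<in>UNIV. e i \<odot> (\<Sum>j\<in>UNIV. e j \<odot> (b l j \<odot> e i)))
        = (\<Sum>i\<in>UNIV. (-2) *\<^sub>R (b l i \<odot> e i)) - (\<Sum>i\<in>UNIV. \<Sum>j\<in>UNIV. e j \<odot> (e i \<odot> (b l j \<odot> e i)))"
      unfolding cmul_sum_right by (rule swap_generators_left)
    also have "(\<Sum>i\<in>UNIV. \<Sum>j\<in>UNIV. e j \<odot> (e i \<odot> (b l j \<odot> e i))) = (\<Sum>j\<in>UNIV. e j \<odot> (\<Sum>i\<in>UNIV. e i \<odot> (b l j \<odot> e i)))"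
      by (subst sum.swap) (simp only: cmul_sum_right)
    also have "\<dots> = 0" by (simp only: sandwich_sum_half_grade[OF ev bk] cmul_zero_right sum.neutral_const)
    finally show ?thesis by (simp only: scaleR_sum_right diff_zero)
  qed
  have "triple_left (\<lambda>l i j. b l j \<odot> e i) = (-2) *\<^sub>R (\<Sum>l\<in>UNIV. \<Sum>i\<in>UNIV. e l \<odot> (b i l \<odot> e i))"
    unfolding triple_left_def inner using bs by (simp only: cmul_scaleR_right cmul_sum_right scaleR_sum_right)
  also have "\<dots> = (-2) *\<^sub>R (\<Sum>j\<in>UNIV. (\<Sum>i\<in>UNIV. e i \<odot> b j i) \<odot> e j)"
    by (subst sum.swap) (simp only: cmul_sum_left assoc_gen)
  finally show ?thesis .
qed

lemma triple_right_sandwich_middle: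
  assumes ev: "even CARD('n)" and bk: "\<And>i j. kvector (CARD('n) div 2) (b i j :: 'n::{finite,linorder} clif)"
    and bs: "\<And>i j. b i j = b j i"
  shows "triple_right (\<lambda>l i j. e i \<odot> b l j) = (-2) *\<^sub>R (\<Sum>j\<in>UNIV. (\<Sum>i\<in>UNIV. e i \<odot> b j i) \<odot> e j)"
proof -
  have inner: "(\<Sum>i\<in>UNIV. (\<Sum>j\<in>UNIV. (e i \<odot> b l j) \<odot> e j) \<odot> e i) = (-2) *\<^sub>R (\<Sum>i\<in>UNIV. e i \<odot> b l i)" for l
  proof -
    have "(\<Sum>i\<in>UNIV. (\<Sum>j\<in>UNIV. (e i \<odot> b l j) \<odot> e j) \<odot> e i)
        = (\<Sum>i\<in>UNIV. (-2) *\<^sub>R (e i \<odot> b l i)) - (\<Sum>i\<in>UNIV. \<Sum>j\<in>UNIV. ((e i \<odot> b l j) \<odot> e i) \<odot> e j)"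
      unfolding cmul_sum_left by (rule swap_generators_right)
    also have "(\<Sum>i\<in>UNIV. \<Sum>j\<in>UNIV. ((e i \<odot> b l j) \<odot> e i) \<odot> e j) = (\<Sum>j\<in>UNIV. (\<Sum>i\<in>UNIV. (e i \<odot> b l j) \<odot> e i) \<odot> e j)"
      by (subst sum.swap) (simp only: cmul_sum_left)
    also have "\<dots> = 0" by (simp only: sandwich_sum_half_grade'[OF ev bk] cmul_zero_left sum.neutral_const)
    finally show ?thesis by (simp only: scaleR_sum_right diff_zero)
  qed
  show ?thesis
    unfolding triple_right_def inner by (simp only: cmul_scaleR_left cmul_sum_left scaleR_sum_right)
qed

text \<open>The coefficient form of the product identities
  \<partial>^3(F x) = (\<partial>^3F) x - 2 \<partial>F\<partial> and (x F)\<partial>^3 = x (F\<partial>^3) - 2 \<partial>F\<partial>.\<close>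

lemma triple_left_product_rule:
  assumes "even CARD('n)" and "\<And>i j. kvector (CARD('n) div 2) (b i j :: 'n::{finite,linorder} clif)"
    and "\<And>i j. b i j = b j i"
  shows "triple_left (\<lambda>l i j. ((c l i j \<odot> cvec x + b i j \<odot> e l) + b l j \<odot> e i) + b l i \<odot> e j)
       = triple_left c \<odot> cvec x + (-2) *\<^sub>R (\<Sum>j\<in>UNIV. (\<Sum>i\<in>UNIV. e i \<odot> b j i) \<odot> e j)"
  by (simp only: triple_left_add triple_left_mul_cvec triple_left_sandwich_inner[OF assms(1,2)]
      triple_left_sandwich_outer[OF assms] triple_left_sandwich_middle[OF assms] add_0_right)

lemma triple_right_product_rule:
  assumes "even CARD('n)" and "\<And>i j. kvector (CARD('n) div 2) (b i j :: 'n::{finite,linorder} clif)"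
    and "\<And>i j. b i j = b j i"
  shows "triple_right (\<lambda>l i j. e j \<odot> b l i + (e i \<odot> b l j + (e l \<odot> b i j + cvec x \<odot> c l i j)))
       = cvec x \<odot> triple_right c + (-2) *\<^sub>R (\<Sum>j\<in>UNIV. (\<Sum>i\<in>UNIV. e i \<odot> b j i) \<odot> e j)"
  by (simp only: triple_right_add triple_right_cvec_mul triple_right_sandwich_inner[OF assms(1,2)]
      triple_right_sandwich_outer[OF assms] triple_right_sandwich_middle[OF assms] add_0_left add.commute)

text \<open>For a totally symmetric family c (third partials of F) both sides contract to
  -\<Sum> e_l c_lii (resp. -\<Sum> c_lii e_l): this is \<partial>^3F = (\<partial>F\<partial>)\<partial> and F\<partial>^3 = \<partial>(\<partial>F\<partial>).\<close>

lemma triple_left_symmetric: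
  fixes c :: "'n::{finite,linorder} \<Rightarrow> 'n \<Rightarrow> 'n \<Rightarrow> 'n clif"
  assumes c1: "\<And>l i j. c l i j = c i l j" and c2: "\<And>l i j. c l i j = c l j i"
  shows "triple_left c = (\<Sum>l\<in>UNIV. (\<Sum>j\<in>UNIV. (\<Sum>i\<in>UNIV. e i \<odot> c l j i) \<odot> e j) \<odot> e l)"
proof -
  have l1: "(\<Sum>i\<in>UNIV. e i \<odot> (\<Sum>j\<in>UNIV. e j \<odot> c l i j)) = - (\<Sum>i\<in>UNIV. c l i i)" for l
    using contract_symmetric_left[of "c l", OF c2] by (simp only: cmul_sum_right)
  have L: "triple_left c = - (\<Sum>l\<in>UNIV. \<Sum>i\<in>UNIV. e l \<odot> c l i i)"
    unfolding triple_left_def l1 by (simp only: cmul_minus_right cmul_sum_right sum_negf)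
  have "(\<Sum>l\<in>UNIV. (\<Sum>j\<in>UNIV. (\<Sum>i\<in>UNIV. e i \<odot> c l j i) \<odot> e j) \<odot> e l)
      = (\<Sum>l\<in>UNIV. \<Sum>j\<in>UNIV. \<Sum>i\<in>UNIV. e i \<odot> ((c l j i \<odot> e j) \<odot> e l))"
    by (simp only: cmul_sum_left assoc_gen)
  also have "\<dots> = (\<Sum>l\<in>UNIV. \<Sum>i\<in>UNIV. \<Sum>j\<in>UNIV. e i \<odot> ((c l j i \<odot> e j) \<odot> e l))"
    by (rule sum.cong[OF refl], rule sum.swap)
  also have "\<dots> = (\<Sum>i\<in>UNIV. \<Sum>l\<in>UNIV. \<Sum>j\<in>UNIV. e i \<odot> ((c l j i \<odot> e j) \<odot> e l))"
    by (rule sum.swap)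
  also have "\<dots> = (\<Sum>i\<in>UNIV. e i \<odot> (\<Sum>l\<in>UNIV. \<Sum>j\<in>UNIV. (c l j i \<odot> e j) \<odot> e l))"
    by (simp only: cmul_sum_right)
  also have "\<dots> = (\<Sum>i\<in>UNIV. e i \<odot> (- (\<Sum>l\<in>UNIV. c l l i)))"
  proof -
    have "c l j i = c j l i" for l j i by (rule c1)
    then show ?thesis using contract_symmetric_right[of "\<lambda>l j. c l j i" for i] by simp
  qed
  also have "\<dots> = - (\<Sum>i\<in>UNIV. \<Sum>l\<in>UNIV. e i \<odot> c l l i)"
    by (simp only: cmul_minus_right cmul_sum_right sum_negf)
  also have "(\<Sum>i\<in>UNIV. \<Sum>l\<in>UNIV. e i \<odot> c l l i) = (\<Sum>l\<in>UNIV. \<Sum>i\<in>UNIV. e l \<odot> c l i i)"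
    by (intro sum.cong refl) (metis c1 c2)
  finally show ?thesis using L by simp
qed

lemma triple_right_symmetric:
  fixes c :: "'n::{finite,linorder} \<Rightarrow> 'n \<Rightarrow> 'n \<Rightarrow> 'n clif"
  assumes c1: "\<And>l i j. c l i j = c i l j" and c2: "\<And>l i j. c l i j = c l j i"
  shows "triple_right c = (\<Sum>l\<in>UNIV. e l \<odot> (\<Sum>j\<in>UNIV. (\<Sum>i\<in>UNIV. e i \<odot> c l j i) \<odot> e j))"
proof -
  have l1: "(\<Sum>i\<in>UNIV. (\<Sum>j\<in>UNIV. c l i j \<odot> e j) \<odot> e i) = - (\<Sum>i\<in>UNIV. c l i i)" for l
    using contract_symmetric_right[of "c l", OF c2] by (simp only: cmul_sum_left)
  have L: "triple_right c = - (\<Sum>l\<in>UNIV. \<Sum>i\<in>UNIV. c l i i \<odot> e l)"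
    unfolding triple_right_def l1 by (simp only: cmul_minus_left cmul_sum_left sum_negf)
  have "(\<Sum>l\<in>UNIV. e l \<odot> (\<Sum>j\<in>UNIV. (\<Sum>i\<in>UNIV. e i \<odot> c l j i) \<odot> e j))
      = (\<Sum>l\<in>UNIV. \<Sum>j\<in>UNIV. \<Sum>i\<in>UNIV. (e l \<odot> (e i \<odot> c l j i)) \<odot> e j)"
    by (simp only: cmul_sum_left cmul_sum_right assoc_gen)
  also have "\<dots> = (\<Sum>j\<in>UNIV. \<Sum>l\<in>UNIV. \<Sum>i\<in>UNIV. (e l \<odot> (e i \<odot> c l j i)) \<odot> e j)"
    by (rule sum.swap)
  also have "\<dots> = (\<Sum>j\<in>UNIV. (\<Sum>l\<in>UNIV. \<Sum>i\<in>UNIV. e l \<odot> (e i \<odot> c l j i)) \<odot> e j)"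
    by (simp only: cmul_sum_left)
  also have "\<dots> = (\<Sum>j\<in>UNIV. (- (\<Sum>l\<in>UNIV. c l j l)) \<odot> e j)"
  proof -
    have "c l j i = c i j l" for l j i by (metis c1 c2)
    then show ?thesis using contract_symmetric_left[of "\<lambda>l i. c l j i" for j] by simp
  qed
  also have "\<dots> = - (\<Sum>j\<in>UNIV. \<Sum>l\<in>UNIV. c l j l \<odot> e j)"
    by (simp only: cmul_minus_left cmul_sum_left sum_negf)
  also have "(\<Sum>j\<in>UNIV. \<Sum>l\<in>UNIV. c l j l \<odot> e j) = (\<Sum>l\<in>UNIV. \<Sum>i\<in>UNIV. c l i i \<odot> e l)"
    by (intro sum.cong refl) (metis c1 c2)
  finally show ?thesis using L by simp
qed

definition has_pd :: "'n::{finite,linorder} \<Rightarrow> (real ^ 'n::{finite,linorder} \<Rightarrow> 'b::real_normed_vector)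
    \<Rightarrow> real ^ 'n::{finite,linorder} \<Rightarrow> 'b \<Rightarrow> bool" where
  "has_pd j f x D \<longleftrightarrow> ((\<lambda>t. f (x + t *\<^sub>R axis j 1)) has_vector_derivative D) (at 0)"

lemma has_pd_imp_pd: "has_pd j f x D \<Longrightarrow> pd j f x = D"
  unfolding has_pd_def pd_def by (rule vector_derivative_at)

lemma has_pd_unique: "has_pd j f x D \<Longrightarrow> has_pd j f x D' \<Longrightarrow> D = D'"
  using has_pd_imp_pd by metis

lemma differentiable_imp_has_pd:
  "(\<lambda>t. f (x + t *\<^sub>R axis j 1)) differentiable (at 0) \<Longrightarrow> has_pd j f x (pd j f x)"
  unfolding has_pd_def pd_def by (simp add: vector_derivative_works[symmetric])

lemma has_pd_const: "has_pd j (\<lambda>y. c) x 0"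
  unfolding has_pd_def by simp

lemma has_pd_add: "has_pd j f x D \<Longrightarrow> has_pd j g x E \<Longrightarrow> has_pd j (\<lambda>y. f y + g y) x (D + E)"
  unfolding has_pd_def by (rule has_vector_derivative_add)

lemma has_pd_sum:
  "(\<And>i. i \<in> I \<Longrightarrow> has_pd j (f i) x (D i)) \<Longrightarrow> has_pd j (\<lambda>y. \<Sum>i\<in>I. f i y) x (\<Sum>i\<in>I. D i)"
  unfolding has_pd_def by (rule has_vector_derivative_sum)

lemma has_pd_bounded_linear: "bounded_linear L \<Longrightarrow> has_pd j f x D \<Longrightarrow> has_pd j (\<lambda>y. L (f y)) x (L D)"
  unfolding has_pd_def by (rule bounded_linear.has_vector_derivative)

lemma has_pd_cmul_left: "has_pd j f x D \<Longrightarrow> has_pd j (\<lambda>y. c \<odot> f y) x (c \<odot> D)"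
  by (rule has_pd_bounded_linear[OF bounded_bilinear.bounded_linear_right[OF bounded_bilinear_cmul]])

lemma has_pd_cmul_right: "has_pd j f x D \<Longrightarrow> has_pd j (\<lambda>y. f y \<odot> c) x (D \<odot> c)"
  by (rule has_pd_bounded_linear[OF bounded_bilinear.bounded_linear_left[OF bounded_bilinear_cmul]])

lemma has_pd_component: "has_pd j f x D \<Longrightarrow> ((\<lambda>t. f (x + t *\<^sub>R axis j 1) $ A) has_real_derivative D $ A) (at 0)"
  unfolding has_pd_def has_real_derivative_iff_has_vector_derivative
  by (rule bounded_linear.has_vector_derivative[OF bounded_linear_vec_nth])

lemma cvec_line_derivative: "((\<lambda>t. cvec (x + t *\<^sub>R axis j 1)) has_vector_derivative e j) (at 0)"
proof -
  have line: "cvec (x + t *\<^sub>R axis j 1) = cvec x + t *\<^sub>R e j" for t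
  proof -
    have "cvec (x + t *\<^sub>R axis j 1) = (\<Sum>k\<in>UNIV. (x $ k) *\<^sub>R e k + (if k = j then t else 0) *\<^sub>R e k)"
      unfolding cvec_def by (intro sum.cong refl) (simp add: axis_def scaleR_add_left)
    also have "\<dots> = cvec x + t *\<^sub>R e j"
      by (simp add: sum.distrib cvec_def if_distrib[of "\<lambda>r. r *\<^sub>R _"] cong: if_cong)
    finally show ?thesis .
  qed
  show ?thesis unfolding line by (auto intro!: derivative_eq_intros)
qed

lemma has_pd_mul_cvec: "has_pd j f x D \<Longrightarrow> has_pd j (\<lambda>y. f y \<odot> cvec y) x (D \<odot> cvec x + f x \<odot> e j)"
  unfolding has_pd_def
  using bounded_bilinear.has_vector_derivative[OF bounded_bilinear_cmul, of "\<lambda>t. f (x + t *\<^sub>R axis j 1)" D 0 UNIV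
      "\<lambda>t. cvec (x + t *\<^sub>R axis j 1)" "e j", OF _ cvec_line_derivative]
  by (simp add: add.commute)

lemma has_pd_cvec_mul: "has_pd j f x D \<Longrightarrow> has_pd j (\<lambda>y. cvec y \<odot> f y) x (e j \<odot> f x + cvec x \<odot> D)"
  unfolding has_pd_def
  using bounded_bilinear.has_vector_derivative[OF bounded_bilinear_cmul,
      of "\<lambda>t. cvec (x + t *\<^sub>R axis j 1)" "e j" 0 UNIV "\<lambda>t. f (x + t *\<^sub>R axis j 1)" D, OF cvec_line_derivative]
  by (simp add: add.commute)

lemma has_pd_local:
  assumes "has_pd j f x D" "open \<Omega>" "x \<in> \<Omega>" "\<And>y. y \<in> \<Omega> \<Longrightarrow> f y = g y"
  shows "has_pd j g x D"
proof -
  let ?S = "(\<lambda>t. x + t *\<^sub>R axis j (1::real)) -` \<Omega>"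
  have "open ?S" by (rule continuous_open_vimage) (use assms(2) in \<open>auto intro!: continuous_intros\<close>)
  moreover have "0 \<in> ?S" using assms(3) by simp
  ultimately show ?thesis
    using assms(1,4) unfolding has_pd_def by (auto intro: has_vector_derivative_transform_within_open)
qed

lemma has_pd_zero_local:
  assumes "open \<Omega>" "x \<in> \<Omega>" "\<And>y. y \<in> \<Omega> \<Longrightarrow> f y = 0"
  shows "has_pd j f x 0"
  using has_pd_local[OF has_pd_const assms(1,2)] assms(3) by metis

lemma has_pd_kvector:
  fixes f :: "real ^ 'n::{finite,linorder} \<Rightarrow> 'n clif"
  assumes "has_pd j f x D" "open \<Omega>" "x \<in> \<Omega>" "\<And>y. y \<in> \<Omega> \<Longrightarrow> kvector k (f y)"
  shows "kvector k D"
proof -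
  define P :: "'n clif \<Rightarrow> 'n clif" where "P u = (\<chi> A. if card A \<noteq> k then u $ A else 0)" for u
  have "bounded_linear P"
    unfolding P_def by (rule linear_conv_bounded_linear[THEN iffD1]) (simp add: linear_iff vec_eq_iff)
  then have "has_pd j (\<lambda>y. P (f y)) x (P D)" using assms(1) by (rule has_pd_bounded_linear)
  moreover have "has_pd j (\<lambda>y. P (f y)) x 0"
    by (rule has_pd_zero_local[OF assms(2,3)]) (use assms(4) in \<open>auto simp: P_def kvector_def vec_eq_iff\<close>)
  ultimately have "P D = 0" by (rule has_pd_unique)
  then show ?thesis unfolding kvector_def P_def vec_eq_iff by (auto, metis)
qed

lemma dirac_l_at:
  assumes "\<And>j. has_pd j f x (D j)"
  shows "dirac_l f x = (\<Sum>j\<in>UNIV. e j \<odot> D j)"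
  unfolding dirac_l_def using has_pd_imp_pd[OF assms] by simp

lemma dirac_r_at:
  assumes "\<And>j. has_pd j f x (D j)"
  shows "dirac_r f x = (\<Sum>j\<in>UNIV. D j \<odot> e j)"
  unfolding dirac_r_def using has_pd_imp_pd[OF assms] by simp

lemma has_pd_dirac_l:
  assumes "open \<Omega>" "x \<in> \<Omega>" "\<And>z j. z \<in> \<Omega> \<Longrightarrow> has_pd j f z (D j z)" "\<And>j. has_pd i (D j) x (D' j)"
  shows "has_pd i (dirac_l f) x (\<Sum>j\<in>UNIV. e j \<odot> D' j)"
proof (rule has_pd_local[OF _ assms(1,2)])
  show "has_pd i (\<lambda>z. \<Sum>j\<in>UNIV. e j \<odot> D j z) x (\<Sum>j\<in>UNIV. e j \<odot> D' j)"
    by (intro has_pd_sum has_pd_cmul_left assms(4))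
  show "(\<Sum>j\<in>UNIV. e j \<odot> D j z) = dirac_l f z" if "z \<in> \<Omega>" for z
    using dirac_l_at[OF assms(3)[OF that]] by simp
qed

lemma has_pd_dirac_r:
  assumes "open \<Omega>" "x \<in> \<Omega>" "\<And>z j. z \<in> \<Omega> \<Longrightarrow> has_pd j f z (D j z)" "\<And>j. has_pd i (D j) x (D' j)"
  shows "has_pd i (dirac_r f) x (\<Sum>j\<in>UNIV. D' j \<odot> e j)"
proof (rule has_pd_local[OF _ assms(1,2)])
  show "has_pd i (\<lambda>z. \<Sum>j\<in>UNIV. D j z \<odot> e j) x (\<Sum>j\<in>UNIV. D' j \<odot> e j)"
    by (intro has_pd_sum has_pd_cmul_right assms(4))
  show "(\<Sum>j\<in>UNIV. D j z \<odot> e j) = dirac_r f z" if "z \<in> \<Omega>" for z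
    using dirac_r_at[OF assms(3)[OF that]] by simp
qed

text \<open>The two mean-value expansions of one mixed second difference produce, arbitrarily close
  to x, a value of one mixed partial equal to a value of the other.\<close>

lemma line_derivative_shift:
  fixes g :: "real ^ 'n \<Rightarrow> real"
  assumes "((\<lambda>t. g ((y + s0 *\<^sub>R u) + t *\<^sub>R u)) has_real_derivative d) (at 0)"
  shows "((\<lambda>s. g (y + s *\<^sub>R u)) has_real_derivative d) (at s0)"
proof -
  have "(\<lambda>t. g (y + (t + s0) *\<^sub>R u)) = (\<lambda>t. g ((y + s0 *\<^sub>R u) + t *\<^sub>R u))"
    by (simp add: algebra_simps)
  then have "((\<lambda>t. g (y + (t + s0) *\<^sub>R u)) has_real_derivative d) (at 0)" using assms by simp
  then show ?thesis using DERIV_shift[of "\<lambda>s. g (y + s *\<^sub>R u)" d 0 s0] by simp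
qed

lemma mixed_difference_mvt:
  fixes g gu gvu :: "real ^ 'n \<Rightarrow> real"
  assumes h: "0 < h"
    and inO: "\<And>s t. 0 \<le> s \<Longrightarrow> s \<le> h \<Longrightarrow> 0 \<le> t \<Longrightarrow> t \<le> h \<Longrightarrow> x + s *\<^sub>R u + t *\<^sub>R v \<in> \<Omega>"
    and du: "\<And>y. y \<in> \<Omega> \<Longrightarrow> ((\<lambda>t. g (y + t *\<^sub>R u)) has_real_derivative gu y) (at 0)"
    and duv: "\<And>y. y \<in> \<Omega> \<Longrightarrow> ((\<lambda>t. gu (y + t *\<^sub>R v)) has_real_derivative gvu y) (at 0)"
  shows "\<exists>s t. 0 < s \<and> s < h \<and> 0 < t \<and> t < h \<and>
    g (x + h *\<^sub>R u + h *\<^sub>R v) - g (x + h *\<^sub>R u) - g (x + h *\<^sub>R v) + g x = h * (h * gvu (x + s *\<^sub>R u + t *\<^sub>R v))"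
proof -
  define \<phi> where "\<phi> s = g (x + s *\<^sub>R u + h *\<^sub>R v) - g (x + s *\<^sub>R u)" for s
  have d\<phi>: "(\<phi> has_real_derivative (gu (x + s *\<^sub>R u + h *\<^sub>R v) - gu (x + s *\<^sub>R u))) (at s)"
    if "0 \<le> s" "s \<le> h" for s
  proof -
    have p1: "x + s *\<^sub>R u + h *\<^sub>R v \<in> \<Omega>" using inO[of s h] that h by simp
    have p2: "x + s *\<^sub>R u \<in> \<Omega>" using inO[of s 0] that h by simp
    have e1: "(x + h *\<^sub>R v) + s *\<^sub>R u = x + s *\<^sub>R u + h *\<^sub>R v" by (simp add: algebra_simps)
    have "((\<lambda>s. g ((x + h *\<^sub>R v) + s *\<^sub>R u)) has_real_derivative gu (x + s *\<^sub>R u + h *\<^sub>R v)) (at s)"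
      by (rule line_derivative_shift) (use du[OF p1] in \<open>simp add: e1\<close>)
    moreover have "(\<lambda>s. g ((x + h *\<^sub>R v) + s *\<^sub>R u)) = (\<lambda>s. g (x + s *\<^sub>R u + h *\<^sub>R v))"
      by (simp add: algebra_simps)
    ultimately have 1: "((\<lambda>s. g (x + s *\<^sub>R u + h *\<^sub>R v)) has_real_derivative gu (x + s *\<^sub>R u + h *\<^sub>R v)) (at s)"
      by simp
    have 2: "((\<lambda>s. g (x + s *\<^sub>R u)) has_real_derivative gu (x + s *\<^sub>R u)) (at s)"
      by (rule line_derivative_shift) (use du[OF p2] in simp)
    show ?thesis unfolding \<phi>_def by (rule DERIV_diff[OF 1 2])
  qed
  obtain s1 where s1: "0 < s1" "s1 < h"
    and eq1: "\<phi> h - \<phi> 0 = (h - 0) * (gu (x + s1 *\<^sub>R u + h *\<^sub>R v) - gu (x + s1 *\<^sub>R u))"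
    using MVT2[OF h d\<phi>] by blast
  define \<psi> where "\<psi> t = gu (x + s1 *\<^sub>R u + t *\<^sub>R v)" for t
  have d\<psi>: "(\<psi> has_real_derivative gvu (x + s1 *\<^sub>R u + t *\<^sub>R v)) (at t)" if "0 \<le> t" "t \<le> h" for t
  proof -
    have p: "x + s1 *\<^sub>R u + t *\<^sub>R v \<in> \<Omega>" using inO[of s1 t] that s1 by simp
    show ?thesis unfolding \<psi>_def by (rule line_derivative_shift) (use duv[OF p] in simp)
  qed
  obtain t1 where t1: "0 < t1" "t1 < h"
    and eq2: "\<psi> h - \<psi> 0 = (h - 0) * gvu (x + s1 *\<^sub>R u + t1 *\<^sub>R v)"
    using MVT2[OF h d\<psi>] by blast
  have "g (x + h *\<^sub>R u + h *\<^sub>R v) - g (x + h *\<^sub>R u) - g (x + h *\<^sub>R v) + g x = \<phi> h - \<phi> 0"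
    unfolding \<phi>_def by simp
  also have "\<dots> = h * (\<psi> h - \<psi> 0)" unfolding eq1 \<psi>_def by simp
  also have "\<dots> = h * (h * gvu (x + s1 *\<^sub>R u + t1 *\<^sub>R v))" unfolding eq2 by simp
  finally show ?thesis using s1 t1 by blast
qed

lemma eq_if_equal_values_nearby:
  fixes f g :: "'a::metric_space \<Rightarrow> real"
  assumes "isCont f x" "isCont g x"
    and "\<And>d. d > 0 \<Longrightarrow> \<exists>p q. dist p x < d \<and> dist q x < d \<and> f p = g q"
  shows "f x = g x"
proof -
  have approx: "\<bar>f x - g x\<bar> < 2 * \<epsilon>" if eps: "\<epsilon> > 0" for \<epsilon>
  proof -
    obtain d1 where d1: "d1 > 0" "\<And>y. dist y x < d1 \<Longrightarrow> dist (f y) (f x) < \<epsilon>"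
      using assms(1) eps unfolding continuous_at_eps_delta by blast
    obtain d2 where d2: "d2 > 0" "\<And>y. dist y x < d2 \<Longrightarrow> dist (g y) (g x) < \<epsilon>"
      using assms(2) eps unfolding continuous_at_eps_delta by blast
    obtain p q where "dist p x < min d1 d2" "dist q x < min d1 d2" "f p = g q"
      using assms(3)[of "min d1 d2"] d1(1) d2(1) by auto
    moreover have "\<bar>f p - f x\<bar> < \<epsilon>" "\<bar>g q - g x\<bar> < \<epsilon>"
      using d1(2)[of p] d2(2)[of q] calculation(1,2) by (simp_all add: dist_real_def)
    ultimately show ?thesis by linarith
  qed
  have "\<bar>f x - g x\<bar> \<le> 0"
    by (rule field_le_epsilon) (use approx[of "_ / 2"] in \<open>fastforce\<close>)
  then show ?thesis by simp
qed

lemma clairaut_real: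
  fixes g gu gv gvu guv :: "real ^ 'n \<Rightarrow> real"
  assumes O: "open \<Omega>" "x \<in> \<Omega>" and nu: "norm u \<le> 1" and nv: "norm v \<le> 1"
    and du: "\<And>y. y \<in> \<Omega> \<Longrightarrow> ((\<lambda>t. g (y + t *\<^sub>R u)) has_real_derivative gu y) (at 0)"
    and dv: "\<And>y. y \<in> \<Omega> \<Longrightarrow> ((\<lambda>t. g (y + t *\<^sub>R v)) has_real_derivative gv y) (at 0)"
    and duv: "\<And>y. y \<in> \<Omega> \<Longrightarrow> ((\<lambda>t. gu (y + t *\<^sub>R v)) has_real_derivative gvu y) (at 0)"
    and dvu: "\<And>y. y \<in> \<Omega> \<Longrightarrow> ((\<lambda>t. gv (y + t *\<^sub>R u)) has_real_derivative guv y) (at 0)"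
    and c1: "continuous_on \<Omega> gvu" and c2: "continuous_on \<Omega> guv"
  shows "gvu x = guv x"
proof -
  obtain r where r: "r > 0" "ball x r \<subseteq> \<Omega>" using O open_contains_ball by blast
  have near: "dist (x + s *\<^sub>R a + t *\<^sub>R b) x \<le> s + t"
    if "0 \<le> s" "0 \<le> t" "norm a \<le> 1" "norm b \<le> 1" for s t and a b :: "real ^ 'n"
  proof -
    have "dist (x + s *\<^sub>R a + t *\<^sub>R b) x \<le> norm (s *\<^sub>R a) + norm (t *\<^sub>R b)"
      using norm_triangle_ineq[of "s *\<^sub>R a" "t *\<^sub>R b"] by (simp add: dist_norm)
    also have "\<dots> \<le> s + t" using that by (simp add: mult_left_le add_mono)
    finally show ?thesis .
  qed
  show ?thesis
  proof (rule eq_if_equal_values_nearby[where f = gvu and g = guv])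
    show "isCont gvu x" "isCont guv x" using c1 c2 O continuous_on_eq_continuous_at by blast+
    fix d :: real
    assume "d > 0"
    define h where "h = min r d / 3"
    have h: "h > 0" "2 * h < r" "2 * h < d" using r(1) \<open>d > 0\<close> unfolding h_def by auto
    have inO: "x + s *\<^sub>R a + t *\<^sub>R b \<in> \<Omega>"
      if "0 \<le> s" "s \<le> h" "0 \<le> t" "t \<le> h" "norm a \<le> 1" "norm b \<le> 1" for s t a b
      using near[of s t a b] that h r(2) by (auto simp: dist_commute subset_iff)
    obtain s1 t1 where st1: "0 < s1" "s1 < h" "0 < t1" "t1 < h"
      and E1: "g (x + h *\<^sub>R u + h *\<^sub>R v) - g (x + h *\<^sub>R u) - g (x + h *\<^sub>R v) + g x
          = h * (h * gvu (x + s1 *\<^sub>R u + t1 *\<^sub>R v))"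
      using mixed_difference_mvt[OF h(1) inO[OF _ _ _ _ nu nv] du duv] by blast
    obtain s2 t2 where st2: "0 < s2" "s2 < h" "0 < t2" "t2 < h"
      and E2: "g (x + h *\<^sub>R v + h *\<^sub>R u) - g (x + h *\<^sub>R v) - g (x + h *\<^sub>R u) + g x
          = h * (h * guv (x + s2 *\<^sub>R v + t2 *\<^sub>R u))"
      using mixed_difference_mvt[OF h(1) inO[OF _ _ _ _ nv nu] dv dvu] by blast
    have "x + h *\<^sub>R v + h *\<^sub>R u = x + h *\<^sub>R u + h *\<^sub>R v" by (simp add: algebra_simps)
    then have "h * (h * gvu (x + s1 *\<^sub>R u + t1 *\<^sub>R v)) = h * (h * guv (x + s2 *\<^sub>R v + t2 *\<^sub>R u))"
      using E1 E2 by (simp only:)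
    then have "gvu (x + s1 *\<^sub>R u + t1 *\<^sub>R v) = guv (x + s2 *\<^sub>R v + t2 *\<^sub>R u)"
      using h(1) by simp
    moreover have "dist (x + s1 *\<^sub>R u + t1 *\<^sub>R v) x < d" "dist (x + s2 *\<^sub>R v + t2 *\<^sub>R u) x < d"
      using near[of s1 t1 u v] near[of s2 t2 v u] st1 st2 nu nv h(3) by auto
    ultimately show "\<exists>p q. dist p x < d \<and> dist q x < d \<and> gvu p = guv q" by blast
  qed
qed

lemma clairaut:
  fixes f :: "real ^ 'n::{finite,linorder} \<Rightarrow> real ^ 'm"
  assumes O: "open \<Omega>" "x \<in> \<Omega>"
    and h1: "\<And>y. y \<in> \<Omega> \<Longrightarrow> has_pd i f y (fi y)" and h2: "\<And>y. y \<in> \<Omega> \<Longrightarrow> has_pd j f y (fj y)"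
    and h3: "\<And>y. y \<in> \<Omega> \<Longrightarrow> has_pd j fi y (fji y)" and h4: "\<And>y. y \<in> \<Omega> \<Longrightarrow> has_pd i fj y (fij y)"
    and c1: "continuous_on \<Omega> fji" and c2: "continuous_on \<Omega> fij"
  shows "fji x = fij x"
proof -
  have "fji x $ A = fij x $ A" for A
    by (rule clairaut_real[OF O, where u="axis i 1" and v="axis j 1" and g="\<lambda>y. f y $ A"
          and gu="\<lambda>y. fi y $ A" and gv="\<lambda>y. fj y $ A"])
      (auto intro!: has_pd_component h1 h2 h3 h4 continuous_on_component c1 c2)
  then show ?thesis by (simp add: vec_eq_iff)
qed

locale C3_function =
  fixes \<Omega> :: "(real ^ 'n::{finite,linorder}) set"
    and F :: "real ^ 'n::{finite,linorder} \<Rightarrow> 'n::{finite,linorder} clif"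
  assumes open_dom: "open \<Omega>" and smooth: "Ck_on 3 \<Omega> F"
begin

definition D1 :: "'n::{finite,linorder} \<Rightarrow> real ^ 'n::{finite,linorder} \<Rightarrow> 'n::{finite,linorder} clif"
  where "D1 j = pd j F"

definition D2 :: "'n::{finite,linorder} \<Rightarrow> 'n::{finite,linorder}
    \<Rightarrow> real ^ 'n::{finite,linorder} \<Rightarrow> 'n::{finite,linorder} clif"
  where "D2 i j = pd i (D1 j)"

definition D3 :: "'n::{finite,linorder} \<Rightarrow> 'n::{finite,linorder} \<Rightarrow> 'n::{finite,linorder}
    \<Rightarrow> real ^ 'n::{finite,linorder} \<Rightarrow> 'n::{finite,linorder} clif"
  where "D3 l i j = pd l (D2 i j)"

lemma smooth_Suc: "Ck_on (Suc (Suc (Suc 0))) \<Omega> F"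
  using smooth by (simp only: numeral_3_eq_3)

lemma has_D1: "y \<in> \<Omega> \<Longrightarrow> has_pd j F y (D1 j y)"
  unfolding D1_def by (rule differentiable_imp_has_pd) (use smooth_Suc in simp)

lemma has_D2: "y \<in> \<Omega> \<Longrightarrow> has_pd i (D1 j) y (D2 i j y)"
  unfolding D2_def by (rule differentiable_imp_has_pd) (use smooth_Suc in \<open>simp add: D1_def\<close>)

lemma has_D3: "y \<in> \<Omega> \<Longrightarrow> has_pd l (D2 i j) y (D3 l i j y)"
  unfolding D3_def by (rule differentiable_imp_has_pd) (use smooth_Suc in \<open>simp add: D1_def D2_def\<close>)

lemma continuous_D2: "continuous_on \<Omega> (D2 i j)"
  using smooth_Suc by (simp add: D1_def D2_def)

lemma continuous_D3: "continuous_on \<Omega> (D3 l i j)"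
  using smooth_Suc by (simp add: D1_def D2_def D3_def)

lemma D2_sym: "y \<in> \<Omega> \<Longrightarrow> D2 i j y = D2 j i y"
  by (rule clairaut[OF open_dom, where f = F]) (auto intro: has_D1 has_D2 continuous_D2)

lemma D3_sym_first: "x \<in> \<Omega> \<Longrightarrow> D3 l i j x = D3 i l j x"
  unfolding D3_def
  by (rule clairaut[OF open_dom, where f = "D1 j"])
    (auto intro: has_D2 has_D3[unfolded D3_def] continuous_D3[unfolded D3_def])

lemma D3_sym_last: "x \<in> \<Omega> \<Longrightarrow> D3 l i j x = D3 l j i x"
proof -
  assume x: "x \<in> \<Omega>"
  have "has_pd l (D2 j i) x (D3 l i j x)"
    by (rule has_pd_local[OF has_D3[OF x] open_dom x]) (rule D2_sym)
  then show ?thesis using has_D3[OF x] by (rule has_pd_unique)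
qed

lemma has_pd_dirac_l_F: "y \<in> \<Omega> \<Longrightarrow> has_pd i (dirac_l F) y (\<Sum>j\<in>UNIV. e j \<odot> D2 i j y)"
  by (rule has_pd_dirac_l[OF open_dom _ has_D1 has_D2])

lemma has_pd_dirac_r_F: "y \<in> \<Omega> \<Longrightarrow> has_pd i (dirac_r F) y (\<Sum>j\<in>UNIV. D2 i j y \<odot> e j)"
  by (rule has_pd_dirac_r[OF open_dom _ has_D1 has_D2])

lemma dirac_r_dirac_l_F:
  "y \<in> \<Omega> \<Longrightarrow> dirac_r (dirac_l F) y = (\<Sum>i\<in>UNIV. (\<Sum>j\<in>UNIV. e j \<odot> D2 i j y) \<odot> e i)"
  by (rule dirac_r_at[OF has_pd_dirac_l_F])

lemma has_pd_dirac_r_dirac_l_F: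
  "x \<in> \<Omega> \<Longrightarrow> has_pd l (dirac_r (dirac_l F)) x (\<Sum>i\<in>UNIV. (\<Sum>j\<in>UNIV. e j \<odot> D3 l i j x) \<odot> e i)"
  by (rule has_pd_dirac_r[OF open_dom _ has_pd_dirac_l_F]) (auto intro!: has_pd_sum has_pd_cmul_left has_D3)

lemma dirac_l_cube:
  "x \<in> \<Omega> \<Longrightarrow> (dirac_l ^^ 3) F x = triple_left (\<lambda>l i j. D3 l i j x)"
proof -
  assume x: "x \<in> \<Omega>"
  have "has_pd l (dirac_l (dirac_l F)) x (\<Sum>i\<in>UNIV. e i \<odot> (\<Sum>j\<in>UNIV. e j \<odot> D3 l i j x))" for l
    by (rule has_pd_dirac_l[OF open_dom x has_pd_dirac_l_F]) (auto intro!: has_pd_sum has_pd_cmul_left has_D3 x)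
  then show ?thesis by (simp add: numeral_3_eq_3 dirac_l_at triple_left_def)
qed

lemma dirac_r_cube:
  "x \<in> \<Omega> \<Longrightarrow> (dirac_r ^^ 3) F x = triple_right (\<lambda>l i j. D3 l i j x)"
proof -
  assume x: "x \<in> \<Omega>"
  have "has_pd l (dirac_r (dirac_r F)) x (\<Sum>i\<in>UNIV. (\<Sum>j\<in>UNIV. D3 l i j x \<odot> e j) \<odot> e i)" for l
    by (rule has_pd_dirac_r[OF open_dom x has_pd_dirac_r_F]) (auto intro!: has_pd_sum has_pd_cmul_right has_D3 x)
  then show ?thesis by (simp add: numeral_3_eq_3 dirac_r_at triple_right_def)
qed

lemma dirac_l_cube_mul_cvec:
  "x \<in> \<Omega> \<Longrightarrow> (dirac_l ^^ 3) (\<lambda>y. F y \<odot> cvec y) x =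
     triple_left (\<lambda>l i j. ((D3 l i j x \<odot> cvec x + D2 i j x \<odot> e l) + D2 l j x \<odot> e i) + D2 l i x \<odot> e j)"
proof -
  assume x: "x \<in> \<Omega>"
  let ?G = "\<lambda>y. F y \<odot> cvec y"
  have G1: "has_pd j ?G y (D1 j y \<odot> cvec y + F y \<odot> e j)" if "y \<in> \<Omega>" for j y
    by (rule has_pd_mul_cvec[OF has_D1[OF that]])
  have G2: "has_pd i (dirac_l ?G) y (\<Sum>j\<in>UNIV. e j \<odot> ((D2 i j y \<odot> cvec y + D1 j y \<odot> e i) + D1 i y \<odot> e j))"
    if "y \<in> \<Omega>" for i y
    by (rule has_pd_dirac_l[OF open_dom that G1])
      (auto intro!: has_pd_add has_pd_mul_cvec has_pd_cmul_right has_D1 has_D2 that)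
  have "has_pd l (dirac_l (dirac_l ?G)) x (\<Sum>i\<in>UNIV. e i \<odot> (\<Sum>j\<in>UNIV. e j \<odot>
        (((D3 l i j x \<odot> cvec x + D2 i j x \<odot> e l) + D2 l j x \<odot> e i) + D2 l i x \<odot> e j)))" for l
    by (rule has_pd_dirac_l[OF open_dom x G2])
      (auto intro!: has_pd_sum has_pd_cmul_left has_pd_add has_pd_mul_cvec has_pd_cmul_right has_D2 has_D3 x)
  then show ?thesis by (simp add: numeral_3_eq_3 dirac_l_at triple_left_def)
qed

lemma dirac_r_cube_cvec_mul:
  "x \<in> \<Omega> \<Longrightarrow> (dirac_r ^^ 3) (\<lambda>y. cvec y \<odot> F y) x =
     triple_right (\<lambda>l i j. e j \<odot> D2 l i x + (e i \<odot> D2 l j x + (e l \<odot> D2 i j x + cvec x \<odot> D3 l i j x)))"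
proof -
  assume x: "x \<in> \<Omega>"
  let ?H = "\<lambda>y. cvec y \<odot> F y"
  have H1: "has_pd j ?H y (e j \<odot> F y + cvec y \<odot> D1 j y)" if "y \<in> \<Omega>" for j y
    by (rule has_pd_cvec_mul[OF has_D1[OF that]])
  have H2: "has_pd i (dirac_r ?H) y (\<Sum>j\<in>UNIV. (e j \<odot> D1 i y + (e i \<odot> D1 j y + cvec y \<odot> D2 i j y)) \<odot> e j)"
    if "y \<in> \<Omega>" for i y
    by (rule has_pd_dirac_r[OF open_dom that H1])
      (auto intro!: has_pd_add has_pd_cvec_mul has_pd_cmul_left has_D1 has_D2 that)
  have "has_pd l (dirac_r (dirac_r ?H)) x (\<Sum>i\<in>UNIV. (\<Sum>j\<in>UNIV.
        (e j \<odot> D2 l i x + (e i \<odot> D2 l j x + (e l \<odot> D2 i j x + cvec x \<odot> D3 l i j x))) \<odot> e j) \<odot> e i)" for l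
    by (rule has_pd_dirac_r[OF open_dom x H2])
      (auto intro!: has_pd_sum has_pd_cmul_right has_pd_add has_pd_cvec_mul has_pd_cmul_left has_D2 has_D3 x)
  then show ?thesis by (simp add: numeral_3_eq_3 dirac_r_at triple_right_def)
qed

text \<open>An inframonogenic function is left and right 3-monogenic: pointwise
  \<partial>^3F = (\<partial>F\<partial>)\<partial> and F\<partial>^3 = \<partial>(\<partial>F\<partial>), and \<partial>F\<partial> vanishes on the open set \<Omega>.\<close>

lemma inframonogenic_imp_cubes_vanish:
  assumes "inframonogenic \<Omega> F" "x \<in> \<Omega>"
  shows "(dirac_l ^^ 3) F x = 0" "(dirac_r ^^ 3) F x = 0"
proof -
  have infra_deriv: "(\<Sum>i\<in>UNIV. (\<Sum>j\<in>UNIV. e j \<odot> D3 l i j x) \<odot> e i) = 0" for l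
  proof -
    have "has_pd l (dirac_r (dirac_l F)) x 0"
      by (rule has_pd_zero_local[OF open_dom assms(2)]) (use assms(1) in \<open>simp add: inframonogenic_def\<close>)
    then show ?thesis using has_pd_dirac_r_dirac_l_F[OF assms(2)] by (rule has_pd_unique[symmetric])
  qed
  have sym1: "D3 l i j x = D3 i l j x" and sym2: "D3 l i j x = D3 l j i x" for l i j
    using D3_sym_first D3_sym_last assms(2) by blast+
  show "(dirac_l ^^ 3) F x = 0"
    unfolding dirac_l_cube[OF assms(2)] triple_left_symmetric[OF sym1 sym2] infra_deriv
    by simp
  show "(dirac_r ^^ 3) F x = 0"
    unfolding dirac_r_cube[OF assms(2)] triple_right_symmetric[OF sym1 sym2] infra_deriv
    by simp
qed

end

text \<open>If moreover m is even and F takes values in the (m/2)-vectors, the sandwich sums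
  in the product rule vanish and one obtains
    \<partial>^3(F x) = (\<partial>^3F) x - 2 \<partial>F\<partial>   and   (x F)\<partial>^3 = x (F\<partial>^3) - 2 \<partial>F\<partial>.\<close>

locale half_grade_C3_function = C3_function \<Omega> F
  for \<Omega> :: "(real ^ 'n::{finite,linorder}) set" and F +
  assumes even_dim: "even CARD('n::{finite,linorder})"
    and half_grade: "\<And>x. x \<in> \<Omega> \<Longrightarrow> kvector (CARD('n::{finite,linorder}) div 2) (F x)"
begin

lemma D2_half_grade: "y \<in> \<Omega> \<Longrightarrow> kvector (CARD('n) div 2) (D2 i j y)"
  by (rule has_pd_kvector[OF has_D2 open_dom], assumption+)
    (rule has_pd_kvector[OF has_D1 open_dom], assumption+, rule half_grade)

lemma dirac_l_cube_mul_cvec_identity: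
  assumes "x \<in> \<Omega>"
  shows "(dirac_l ^^ 3) (\<lambda>y. F y \<odot> cvec y) x = (dirac_l ^^ 3) F x \<odot> cvec x + (-2) *\<^sub>R dirac_r (dirac_l F) x"
  unfolding dirac_l_cube_mul_cvec[OF assms] dirac_l_cube[OF assms] dirac_r_dirac_l_F[OF assms]
  by (rule triple_left_product_rule) (use assms D2_sym D2_half_grade even_dim in auto)

lemma dirac_r_cube_cvec_mul_identity:
  assumes "x \<in> \<Omega>"
  shows "(dirac_r ^^ 3) (\<lambda>y. cvec y \<odot> F y) x = cvec x \<odot> (dirac_r ^^ 3) F x + (-2) *\<^sub>R dirac_r (dirac_l F) x"
  unfolding dirac_r_cube_cvec_mul[OF assms] dirac_r_cube[OF assms] dirac_r_dirac_l_F[OF assms]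
  by (rule triple_right_product_rule) (use assms D2_sym D2_half_grade even_dim in auto)

text \<open>Forwards, both cubes vanish by the previous lemma and the product identity;
  backwards, the product identity leaves -2 \<partial>F\<partial> = 0.\<close>

lemma inframonogenic_iff_left:
  "inframonogenic \<Omega> F \<longleftrightarrow> left_monogenic_k 3 \<Omega> F \<and> left_monogenic_k 3 \<Omega> (\<lambda>x. F x \<odot> cvec x)"
  using inframonogenic_imp_cubes_vanish(1) dirac_l_cube_mul_cvec_identity
  unfolding inframonogenic_def left_monogenic_k_def by auto

lemma inframonogenic_iff_right:
  "inframonogenic \<Omega> F \<longleftrightarrow> right_monogenic_k 3 \<Omega> F \<and> right_monogenic_k 3 \<Omega> (\<lambda>x. cvec x \<odot> F x)"
  using inframonogenic_imp_cubes_vanish(2) dirac_r_cube_cvec_mul_identity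
  unfolding inframonogenic_def right_monogenic_k_def by auto

end

theorem mainTheorem10:
  fixes F :: "real ^ 'n::{finite,linorder} \<Rightarrow> 'n::{finite,linorder} clif"
    and \<Omega> :: "(real ^ 'n::{finite,linorder}) set"
  assumes "even CARD('n::{finite,linorder})"
    and "open \<Omega>"
    and "Ck_on 3 \<Omega> F"
    and "\<forall>x\<in>\<Omega>. kvector (CARD('n::{finite,linorder}) div 2) (F x)"
  shows "(inframonogenic \<Omega> F \<longleftrightarrow>
            left_monogenic_k 3 \<Omega> F \<and> left_monogenic_k 3 \<Omega> (\<lambda>x. F x \<odot> cvec x))
       \<and> (inframonogenic \<Omega> F \<longleftrightarrow>
            right_monogenic_k 3 \<Omega> F \<and> right_monogenic_k 3 \<Omega> (\<lambda>x. cvec x \<odot> F x))"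
proof -
  interpret half_grade_C3_function \<Omega> F
    using assms by unfold_locales auto
  show ?thesis
    using inframonogenic_iff_left inframonogenic_iff_right by blast
qed

end
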